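(* Let $n\geq 10^6$ and let $K_{2n+1}$ be ND-coloured. Let $T$ be a tree on $n+1$ vertices containing a vertex $v_1$ which is adjacent to at least $2n/3$ leaves. Then $K_{2n+1}$ contains a rainbow copy of $T$.
   Context: The ND-colouring of $K_{2n+1}$: vertex set $\{0,1,\dots,2n\}$, and the edge $ij$ receives colour $k\in\{1,\dots,n\}$ where $i-j\equiv \pm k \pmod{2n+1}$. A subgraph is rainbow if all its edges have distinct colours. *)

theory Defs
  imports Main
begin

definition simple_graph :: "'a set \<Rightarrow> 'a set set \<Rightarrow> bool" where
  "simple_graph V E \<longleftrightarrow> finite V \<and> (\<forall>e\<in>E. e \<subseteq> V \<and> card e = 2)"

definition adj :: "'a set set \<Rightarrow> 'a \<Rightarrow> 'a \<Rightarrow> bool" where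
  "adj E u v \<longleftrightarrow> {u, v} \<in> E"

definition connected_graph :: "'a set \<Rightarrow> 'a set set \<Rightarrow> bool" where
  "connected_graph V E \<longleftrightarrow> (\<forall>u\<in>V. \<forall>v\<in>V. (adj E)\<^sup>*\<^sup>* u v)"

definition is_tree :: "'a set \<Rightarrow> 'a set set \<Rightarrow> bool" where
  "is_tree V E \<longleftrightarrow> simple_graph V E \<and> V \<noteq> {} \<and> connected_graph V E
     \<and> card E + 1 = card V"

definition degree :: "'a set set \<Rightarrow> 'a \<Rightarrow> nat" where
  "degree E v = card {e \<in> E. v \<in> e}"

definition leaves_at :: "'a set set \<Rightarrow> 'a \<Rightarrow> 'a set" where
  "leaves_at E v = {u. {v, u} \<in> E \<and> degree E u = 1}"

text \<open>ND-colouring of K_{2n+1} on vertex set {0..2n}: edge ij gets colour k in {1..n}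
  with i - j = +-k (mod 2n+1).\<close>
definition nd_colour :: "nat \<Rightarrow> nat \<Rightarrow> nat \<Rightarrow> nat" where
  "nd_colour n i j =
     (let d = (int i - int j) mod int (2*n+1)
      in nat (min d (int (2*n+1) - d)))"

definition rainbow_copy :: "nat \<Rightarrow> 'a set \<Rightarrow> 'a set set \<Rightarrow> ('a \<Rightarrow> nat) \<Rightarrow> bool" where
  "rainbow_copy n V E f \<longleftrightarrow>
     f ` V \<subseteq> {0..2*n} \<and> inj_on f V \<and>
     (\<forall>u v x y. {u, v} \<in> E \<and> {x, y} \<in> E \<and> {u, v} \<noteq> {x, y} \<longrightarrow>
        nd_colour n (f u) (f v) \<noteq> nd_colour n (f x) (f y))"

end

theory Submission
  imports Defs
begin

(* Let L be the set of leaves at v1 and W = V - L, so the subtree spanned by W has at most n/3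
   edges.  On {0..n} the ND-colour of a pair is just the distance, so it suffices to place W
   injectively into {0..n}, with v1 at 0, such that the edges inside W have pairwise distinct
   lengths; this is done greedily along the tree, each new vertex having a single neighbour that
   is already placed. *)

definition edge_length :: "('a \<Rightarrow> nat) \<Rightarrow> 'a set \<Rightarrow> nat" where
  "edge_length f e = Max (f ` e) - Min (f ` e)"

lemma edge_length_pair: "edge_length f {a, b} = max (f a) (f b) - min (f a) (f b)"
  unfolding edge_length_def by (auto simp: max_def min_def)

lemma edge_length_cong: "(\<And>x. x \<in> e \<Longrightarrow> f x = g x) \<Longrightarrow> edge_length f e = edge_length g e"
  unfolding edge_length_def by (simp cong: image_cong)

lemma nd_colour_eq:
  assumes "i \<le> 2*n" "j \<le> 2*n"
  shows "nd_colour n i j = min (max i j - min i j) (2*n+1 - (max i j - min i j))"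
proof (cases "j \<le> i")
  case True
  then have "(int i - int j) mod int (2*n+1) = int i - int j"
    using assms by (intro mod_pos_pos_trivial) auto
  then show ?thesis using True unfolding nd_colour_def Let_def by auto
next
  case False
  have "(int i - int j) mod int (2*n+1) = (int i - int j + int (2*n+1)) mod int (2*n+1)"
    by simp
  also have "\<dots> = int i - int j + int (2*n+1)"
    using False assms by (intro mod_pos_pos_trivial) auto
  finally show ?thesis using False unfolding nd_colour_def Let_def by auto
qed

definition nd_edge_colour :: "nat \<Rightarrow> ('a \<Rightarrow> nat) \<Rightarrow> 'a set \<Rightarrow> nat" where
  "nd_edge_colour n f e = min (edge_length f e) (2*n+1 - edge_length f e)"

lemma nd_colour_eq_nd_edge_colour:
  "f a \<le> 2*n \<Longrightarrow> f b \<le> 2*n \<Longrightarrow> nd_colour n (f a) (f b) = nd_edge_colour n f {a, b}"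
  unfolding nd_edge_colour_def edge_length_pair by (simp add: nd_colour_eq)

lemma nd_edge_colour_short: "edge_length f e \<le> n \<Longrightarrow> nd_edge_colour n f e = edge_length f e"
  unfolding nd_edge_colour_def by simp

lemma nd_edge_colour_long:
  "edge_length f e = 2*n+1 - c \<Longrightarrow> c \<le> n \<Longrightarrow> nd_edge_colour n f e = c"
  unfolding nd_edge_colour_def by simp

lemma rainbow_copyI:
  assumes "simple_graph V E" "f ` V \<subseteq> {0..2*n}" "inj_on f V" "inj_on (nd_edge_colour n f) E"
  shows "rainbow_copy n V E f"
  unfolding rainbow_copy_def
proof (intro conjI assms(2,3) allI impI)
  fix u v x y
  assume edges: "{u, v} \<in> E \<and> {x, y} \<in> E \<and> {u, v} \<noteq> {x, y}"
  then have "u \<in> V" "v \<in> V" "x \<in> V" "y \<in> V"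
    using assms(1) unfolding simple_graph_def by auto
  then have "nd_colour n (f u) (f v) = nd_edge_colour n f {u, v}"
    "nd_colour n (f x) (f y) = nd_edge_colour n f {x, y}"
    using assms(2) by (auto intro!: nd_colour_eq_nd_edge_colour)
  then show "nd_colour n (f u) (f v) \<noteq> nd_colour n (f x) (f y)"
    using edges inj_onD[OF assms(4)] by metis
qed

definition induced_edges :: "'a set set \<Rightarrow> 'a set \<Rightarrow> 'a set set" where
  "induced_edges E S = {e \<in> E. e \<subseteq> S}"

lemma simple_graph_finite_edges: "simple_graph V E \<Longrightarrow> finite E"
  unfolding simple_graph_def by (auto intro: finite_subset[of E "Pow V"])

lemma simple_graph_edgeE:
  assumes "simple_graph V E" "e \<in> E"
  obtains a b where "e = {a, b}" "a \<noteq> b" "a \<in> V" "b \<in> V"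
  using assms unfolding simple_graph_def by (metis card_2_iff insert_subset)

lemma finite_induced_edges: "simple_graph V E \<Longrightarrow> finite (induced_edges E S)"
  unfolding induced_edges_def by (auto dest: simple_graph_finite_edges)

lemma induced_edges_singleton: "simple_graph V E \<Longrightarrow> induced_edges E {v} = {}"
  unfolding simple_graph_def induced_edges_def
  by (auto dest!: subset_singletonD)

lemma connected_graph_edge_leaving:
  assumes "simple_graph V E" "connected_graph V E" "v \<in> S" "S \<subseteq> V" "x \<in> V - S"
  shows "\<exists>u\<in>S. \<exists>w\<in>V - S. {u, w} \<in> E"
proof -
  have "(adj E)\<^sup>*\<^sup>* v x"
    using assms unfolding connected_graph_def by auto
  have "y \<in> S \<or> (\<exists>u\<in>S. \<exists>w\<in>V - S. {u, w} \<in> E)" if "(adj E)\<^sup>*\<^sup>* v y" for y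
    using that
  proof (induction rule: rtranclp_induct)
    case (step y z)
    have "z \<in> V" using step(2) assms(1) unfolding adj_def simple_graph_def by auto
    then show ?case using step unfolding adj_def by blast
  qed (use assms in simp)
  then show ?thesis using \<open>(adj E)\<^sup>*\<^sup>* v x\<close> assms(5) by blast
qed

text \<open>Growing S one vertex at a time along a leaving edge gains at least one induced edge per
  vertex.\<close>
lemma connected_graph_induced_edges_bound:
  assumes "simple_graph V E" "connected_graph V E" "v \<in> S" "S \<subseteq> V"
  shows "card (induced_edges E S) + (card V - card S) \<le> card E"
  using assms(3,4)
proof (induction "card (V - S)" arbitrary: S)
  case 0
  then have "S = V" using assms(1) unfolding simple_graph_def by auto
  moreover have "induced_edges E V \<subseteq> E" unfolding induced_edges_def by blast
  ultimately show ?case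
    using card_mono[OF simple_graph_finite_edges[OF assms(1)]] by simp
next
  case (Suc m)
  have fin: "finite V" using assms(1) unfolding simple_graph_def by simp
  obtain x where "x \<in> V - S" using Suc(2) by (metis card.empty ex_in_conv nat.simps(3))
  then obtain u w where uw: "u \<in> S" "w \<in> V - S" "{u, w} \<in> E"
    using connected_graph_edge_leaving[OF assms(1,2) Suc(3,4)] by blast
  have "m = card (V - insert w S)"
    using Suc(2) uw fin by (metis Diff_insert card_Diff_singleton diff_Suc_1 finite_Diff)
  then have "card (induced_edges E (insert w S)) + (card V - card (insert w S)) \<le> card E"
    using Suc(1) Suc(3,4) uw by blast
  moreover have "card (induced_edges E S) < card (induced_edges E (insert w S))"
  proof (rule psubset_card_mono)
    show "finite (induced_edges E (insert w S))" using finite_induced_edges[OF assms(1)] .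
    show "induced_edges E S \<subset> induced_edges E (insert w S)"
      using uw unfolding induced_edges_def by blast
  qed
  moreover have "card (insert w S) = Suc (card S)"
    using uw finite_subset[OF Suc(4) fin] by simp
  moreover have "card (insert w S) \<le> card V"
    using uw Suc(4) by (intro card_mono fin) auto
  ultimately show ?case by linarith
qed

lemma tree_induced_edges_bound:
  assumes "is_tree V E" "v \<in> S" "S \<subseteq> V"
  shows "card (induced_edges E S) < card S"
  using connected_graph_induced_edges_bound[of V E v S] card_mono[of V S] assms
  unfolding is_tree_def simple_graph_def by linarith

lemma tree_induced_edges_insert:
  assumes "is_tree V E" "S \<subseteq> V" "card (induced_edges E S) + 1 = card S"
    and "u \<in> S" "w \<in> V - S" "{u, w} \<in> E"
  shows "induced_edges E (insert w S) = insert {u, w} (induced_edges E S)"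
proof (rule card_seteq[symmetric])
  have sg: "simple_graph V E" and fin: "finite S"
    using assms(1,2) unfolding is_tree_def simple_graph_def by (auto intro: finite_subset)
  show "finite (induced_edges E (insert w S))" using finite_induced_edges[OF sg] .
  show "insert {u, w} (induced_edges E S) \<subseteq> induced_edges E (insert w S)"
    using assms(4,6) unfolding induced_edges_def by auto
  have "{u, w} \<notin> induced_edges E S" using assms(5) unfolding induced_edges_def by auto
  then have "card (insert {u, w} (induced_edges E S)) = card S"
    using assms(3) finite_induced_edges[OF sg] by simp
  moreover have "card (induced_edges E (insert w S)) < card (insert w S)"
    using assms by (intro tree_induced_edges_bound) auto
  ultimately show "card (induced_edges E (insert w S)) \<le> card (insert {u, w} (induced_edges E S))"
    using assms(5) fin by simp
qed

lemma leaves_at_edge: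
  assumes "simple_graph V E" "{a, l} \<in> E" "l \<in> leaves_at E v"
  shows "a = v"
proof -
  have edge: "{v, l} \<in> E" and deg: "card {e \<in> E. l \<in> e} = 1"
    using assms(3) unfolding leaves_at_def degree_def by auto
  obtain x where x: "{e \<in> E. l \<in> e} = {x}" using deg by (rule card_1_singletonE)
  have "{a, l} \<in> {e \<in> E. l \<in> e}" "{v, l} \<in> {e \<in> E. l \<in> e}"
    using edge assms(2) by simp_all
  then have "{a, l} = {v, l}" unfolding x by simp
  moreover have "card {a, l} = 2"
    using assms(1,2) unfolding simple_graph_def by simp
  ultimately show ?thesis by (cases "a = l") (simp_all add: doubleton_eq_iff)
qed

lemma leaves_at_subset:
  assumes "simple_graph V E"
  shows "leaves_at E v \<subseteq> V - {v}"
proof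
  fix l assume "l \<in> leaves_at E v"
  then have "{v, l} \<in> E" by (simp add: leaves_at_def)
  then have "{v, l} \<subseteq> V" "card {v, l} = 2" using assms unfolding simple_graph_def by auto
  then show "l \<in> V - {v}" by auto
qed

lemma finite_leaves_at: "simple_graph V E \<Longrightarrow> finite (leaves_at E v)"
  using leaves_at_subset unfolding simple_graph_def by (metis finite_Diff finite_subset)

lemma edges_split_at_leaves:
  assumes "simple_graph V E"
  shows "E = induced_edges E (V - leaves_at E v) \<union> (\<lambda>l. {v, l}) ` leaves_at E v"
proof (intro equalityI subsetI)
  fix e assume "e \<in> E"
  then obtain a b where e: "e = {a, b}" "{a, b} \<subseteq> V"
    using simple_graph_edgeE[OF assms] by blast
  show "e \<in> induced_edges E (V - leaves_at E v) \<union> (\<lambda>l. {v, l}) ` leaves_at E v"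
  proof (cases "a \<in> leaves_at E v \<or> b \<in> leaves_at E v")
    case True
    then have "e = {v, a} \<and> a \<in> leaves_at E v \<or> e = {v, b} \<and> b \<in> leaves_at E v"
      using leaves_at_edge[OF assms, of _ _ v] \<open>e \<in> E\<close> e by (metis insert_commute)
    then show ?thesis by blast
  qed (use \<open>e \<in> E\<close> e in \<open>auto simp: induced_edges_def\<close>)
qed (auto simp: induced_edges_def leaves_at_def)

lemma card_edges_split_at_leaves:
  assumes "simple_graph V E"
  shows "card E = card (induced_edges E (V - leaves_at E v)) + card (leaves_at E v)"
proof -
  have "inj_on (\<lambda>l. {v, l}) (leaves_at E v)"
    using leaves_at_subset[OF assms] by (auto intro!: inj_onI simp: doubleton_eq_iff)
  moreover have "induced_edges E (V - leaves_at E v) \<inter> (\<lambda>l. {v, l}) ` leaves_at E v = {}"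
    unfolding induced_edges_def by auto
  ultimately show ?thesis
    using edges_split_at_leaves[OF assms, of v] finite_induced_edges[OF assms]
      finite_leaves_at[OF assms] by (metis card_Un_disjoint card_image finite_imageI)
qed

lemma leaves_removed_edge_leaving:
  assumes "simple_graph V E" "connected_graph V E" "W = V - leaves_at E v"
    and "v \<in> T" "T \<subseteq> W" "T \<noteq> W"
  shows "\<exists>u\<in>T. \<exists>w\<in>W - T. {u, w} \<in> E"
proof -
  let ?S = "T \<union> leaves_at E v"
  obtain x where "x \<in> V - ?S" using assms(3,5,6) by blast
  then obtain u w where uw: "u \<in> ?S" "w \<in> V - ?S" "{u, w} \<in> E"
    using connected_graph_edge_leaving[OF assms(1,2), of v ?S] assms leaves_at_subset[OF assms(1)]
    by blast
  have "u \<notin> leaves_at E v"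
    using uw assms(4) leaves_at_edge[OF assms(1), of w u v] by (auto simp: insert_commute)
  then show ?thesis using uw assms(3) by blast
qed

definition rainbow_labelling :: "'a set set \<Rightarrow> nat \<Rightarrow> 'a set \<Rightarrow> ('a \<Rightarrow> nat) \<Rightarrow> bool" where
  "rainbow_labelling E n S f \<longleftrightarrow>
     f ` S \<subseteq> {..n} \<and> inj_on f S \<and> inj_on (edge_length f) (induced_edges E S)"

text \<open>The new label must avoid the old labels and the two labels at distance d from f u, for
  each edge length d in use; this excludes at most card S + 2 * card (induced_edges E S) values.\<close>
lemma rainbow_labelling_insert:
  assumes lab: "rainbow_labelling E n S f" and fin: "finite S" "finite (induced_edges E S)"
    and uw: "u \<in> S" "w \<notin> S"
    and edges: "induced_edges E (insert w S) = insert {u, w} (induced_edges E S)"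
    and room: "card S + 2 * card (induced_edges E S) \<le> n"
  shows "\<exists>p. rainbow_labelling E n (insert w S) (f(w := p))"
proof -
  let ?D = "edge_length f ` induced_edges E S"
  let ?forbidden = "f ` S \<union> (\<lambda>d. f u + d) ` ?D \<union> (\<lambda>d. f u - d) ` ?D"
  have "card ?forbidden \<le> card S + card ?D + card ?D"
    using fin by (meson add_mono card_Un_le card_image_le finite_imageI le_trans)
  also have "\<dots> \<le> n" using room card_image_le[OF fin(2), of "edge_length f"] by linarith
  finally have "card {..n} - card ?forbidden > 0" by simp
  also have "\<dots> \<le> card ({..n} - ?forbidden)"
    using fin by (intro diff_card_le_card_Diff) auto
  finally obtain p where p: "p \<le> n" "p \<notin> ?forbidden"
    by (metis DiffE atMost_iff card.empty ex_in_conv less_irrefl)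
  let ?g = "f(w := p)"
  have same: "edge_length ?g e = edge_length f e" if "e \<in> induced_edges E S" for e
    using that uw(2) by (intro edge_length_cong) (auto simp: induced_edges_def)
  have "edge_length ?g {u, w} \<notin> ?D"
  proof
    assume "edge_length ?g {u, w} \<in> ?D"
    then have "p = f u + edge_length ?g {u, w} \<or> p = f u - edge_length ?g {u, w}"
      using uw by (auto simp: edge_length_pair)
    then show False using p(2) \<open>edge_length ?g {u, w} \<in> ?D\<close> by blast
  qed
  moreover have "{u, w} \<notin> induced_edges E S" using uw(2) by (auto simp: induced_edges_def)
  ultimately have "inj_on (edge_length ?g) (induced_edges E (insert w S))"
    using lab same unfolding edges rainbow_labelling_def
    by (auto simp: inj_on_insert inj_on_def image_iff)
  moreover have "?g ` insert w S \<subseteq> {..n}" "inj_on ?g (insert w S)"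
    using lab p uw(2) unfolding rainbow_labelling_def by (auto simp: inj_on_def)
  ultimately show ?thesis unfolding rainbow_labelling_def by blast
qed

lemma tree_rainbow_labelling_insert:
  assumes tree: "is_tree V E" and S: "S \<subseteq> V" "card (induced_edges E S) + 1 = card S"
    and uw: "u \<in> S" "w \<in> V - S" "{u, w} \<in> E"
    and lab: "rainbow_labelling E n S f" and room: "3 * card S \<le> n + 2"
  shows "\<exists>p. rainbow_labelling E n (insert w S) (f(w := p))"
    and "card (induced_edges E (insert w S)) + 1 = card (insert w S)"
proof -
  have sg: "simple_graph V E" using tree unfolding is_tree_def by simp
  have fin: "finite S" using sg S(1) unfolding simple_graph_def by (auto intro: finite_subset)
  have edges: "induced_edges E (insert w S) = insert {u, w} (induced_edges E S)"
    using tree_induced_edges_insert[OF tree S uw] .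
  have "card S + 2 * card (induced_edges E S) \<le> n" using S(2) room by linarith
  then show "\<exists>p. rainbow_labelling E n (insert w S) (f(w := p))"
    using rainbow_labelling_insert[OF lab fin finite_induced_edges[OF sg] uw(1) _ edges] uw(2)
    by blast
  show "card (induced_edges E (insert w S)) + 1 = card (insert w S)"
    using S(2) uw(2) fin finite_induced_edges[OF sg] unfolding edges
    by (simp add: induced_edges_def)
qed

lemma tree_rainbow_labelling_exists:
  assumes tree: "is_tree V E" and W: "W \<subseteq> V" "v \<in> W"
    and grow: "\<And>T. v \<in> T \<Longrightarrow> T \<subseteq> W \<Longrightarrow> T \<noteq> W \<Longrightarrow> \<exists>u\<in>T. \<exists>w\<in>W - T. {u, w} \<in> E"
    and room: "3 * (card W - 1) \<le> n"
  shows "\<exists>f. f v = 0 \<and> rainbow_labelling E n W f"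
proof -
  have sg: "simple_graph V E" using tree unfolding is_tree_def by simp
  have finW: "finite W" using sg W(1) unfolding simple_graph_def by (auto intro: finite_subset)
  have grown: "\<exists>T f. v \<in> T \<and> T \<subseteq> W \<and> card T = Suc k \<and> card (induced_edges E T) + 1 = card T
      \<and> f v = 0 \<and> rainbow_labelling E n T f" if "k < card W" for k
    using that
  proof (induction k)
    case 0
    have "rainbow_labelling E n {v} (\<lambda>_. 0)"
      unfolding rainbow_labelling_def induced_edges_singleton[OF sg] by simp
    then show ?case using W(2) induced_edges_singleton[OF sg]
      by (intro exI[of _ "{v}"] exI[of _ "\<lambda>_. 0"]) simp
  next
    case (Suc k)
    then obtain T f where T: "v \<in> T" "T \<subseteq> W" "card T = Suc k"
      "card (induced_edges E T) + 1 = card T" and f: "f v = 0" "rainbow_labelling E n T f"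
      by auto
    have "T \<noteq> W" using T(3) Suc(2) by (metis less_irrefl)
    then obtain u w where uw: "u \<in> T" "w \<in> W - T" "{u, w} \<in> E"
      using grow[OF T(1,2)] by blast
    have "T \<subseteq> V" "w \<in> V - T" "3 * card T \<le> n + 2"
      using T(2,3) W(1) uw(2) Suc(2) room by auto
    note step = tree_rainbow_labelling_insert[OF tree this(1) T(4) uw(1) this(2) uw(3) f(2) this(3)]
    obtain p where "rainbow_labelling E n (insert w T) (f(w := p))" using step(1) ..
    moreover have "(f(w := p)) v = 0" "v \<in> insert w T" "insert w T \<subseteq> W"
      "card (insert w T) = Suc (Suc k)"
      using T f uw finite_subset[OF T(2) finW] by auto
    ultimately show ?case using step(2)
      by (intro exI[of _ "insert w T"] exI[of _ "f(w := p)"]) (simp del: fun_upd_apply)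
  qed
  have "card W > 0" using W(2) finW card_gt_0_iff by blast
  then obtain T f where "T \<subseteq> W" "card T = card W" "f v = 0" "rainbow_labelling E n T f"
    using grown[of "card W - 1"] by auto
  then show ?thesis using card_subset_eq[OF finW] by blast
qed

lemma rainbow_copy_attach_leaves:
  assumes sg: "simple_graph V E"
    and L: "L = leaves_at E v" and W: "W = V - L"
    and f: "f v = 0" "rainbow_labelling E n W f"
    and g: "inj_on g L" "g ` L \<subseteq> {1..n} - edge_length f ` induced_edges E W"
  shows "rainbow_copy n V E (\<lambda>x. if x \<in> L then 2*n+1 - g x else f x)"
    (is "rainbow_copy n V E ?F")
proof (rule rainbow_copyI[OF sg])
  have fW: "f x \<le> n" if "x \<in> W" for x
    using f(2) that unfolding rainbow_labelling_def by auto
  have gL: "1 \<le> g l" "g l \<le> n" "g l \<notin> edge_length f ` induced_edges E W" if "l \<in> L" for l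
    using g(2) that by auto
  show "?F ` V \<subseteq> {0..2*n}"
  proof (rule image_subsetI)
    fix x assume "x \<in> V"
    then show "?F x \<in> {0..2*n}" using fW[of x] gL[of x] W by auto
  qed
  show "inj_on ?F V"
  proof (rule inj_onI)
    fix x y assume "x \<in> V" "y \<in> V" "?F x = ?F y"
    moreover have "inj_on f W" using f(2) unfolding rainbow_labelling_def by simp
    ultimately show "x = y"
      using inj_onD[OF g(1)] fW[of x] fW[of y] gL[of x] gL[of y] W
      by (cases "x \<in> L"; cases "y \<in> L") (auto simp: inj_on_def)
  qed
  have vL: "v \<notin> L" using leaves_at_subset[OF sg] L by blast
  have short: "nd_edge_colour n ?F e = edge_length f e" if e: "e \<in> induced_edges E W" for e
  proof -
    have "edge_length ?F e = edge_length f e"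
      using e W by (intro edge_length_cong) (auto simp: induced_edges_def)
    moreover have "edge_length f e \<le> n"
    proof -
      obtain a b where ab: "e = {a, b}"
        using simple_graph_edgeE[OF sg] e unfolding induced_edges_def by blast
      then have "f a \<le> n" "f b \<le> n"
        using fW e unfolding induced_edges_def by auto
      then show ?thesis unfolding ab edge_length_pair by linarith
    qed
    ultimately show ?thesis by (metis nd_edge_colour_short)
  qed
  have long: "nd_edge_colour n ?F {v, l} = g l" if "l \<in> L" for l
    using that vL f(1) gL[OF that] by (intro nd_edge_colour_long) (auto simp: edge_length_pair)
  have "inj_on (nd_edge_colour n ?F) (induced_edges E W)"
    using f(2) inj_on_cong[of _ "nd_edge_colour n ?F" "edge_length f", OF short]
    unfolding rainbow_labelling_def by blast
  moreover have "inj_on (nd_edge_colour n ?F) ((\<lambda>l. {v, l}) ` L)"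
    using long g(1) unfolding inj_on_def by auto
  moreover have "nd_edge_colour n ?F ` induced_edges E W = edge_length f ` induced_edges E W"
    using short by (rule image_cong[OF refl])
  moreover have "nd_edge_colour n ?F ` (\<lambda>l. {v, l}) ` L = g ` L"
    unfolding image_image using long by (rule image_cong[OF refl])
  ultimately have "inj_on (nd_edge_colour n ?F) (induced_edges E W \<union> (\<lambda>l. {v, l}) ` L)"
    using g(2) unfolding inj_on_Un by blast
  then show "inj_on (nd_edge_colour n ?F) E"
    using edges_split_at_leaves[OF sg, of v] by (simp only: L W)
qed

lemma rainbow_copy_of_rainbow_labelling:
  assumes sg: "simple_graph V E" and "card E = n"
    and f: "f v = 0" "rainbow_labelling E n (V - leaves_at E v) f"
  shows "\<exists>F. rainbow_copy n V E F"
proof -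
  define L where "L = leaves_at E v"
  define W where "W = V - L"
  let ?free = "{1..n} - edge_length f ` induced_edges E W"
  have finite: "finite L" "finite (induced_edges E W)"
    using finite_leaves_at[OF sg] finite_induced_edges[OF sg] unfolding L_def by auto
  have "card (induced_edges E W) + card L = n"
    using card_edges_split_at_leaves[OF sg, of v] assms(2) unfolding W_def L_def by linarith
  moreover have "card (edge_length f ` induced_edges E W) \<le> card (induced_edges E W)"
    using finite(2) by (rule card_image_le)
  moreover have "card {1..n} - card (edge_length f ` induced_edges E W) \<le> card ?free"
    using finite(2) by (intro diff_card_le_card_Diff) auto
  ultimately have "card L \<le> card ?free" by simp
  then obtain g where "g ` L \<subseteq> ?free" "inj_on g L"
    using card_le_inj[OF finite(1)] by blast
  moreover have "rainbow_labelling E n W f" using f(2) unfolding W_def L_def .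
  ultimately have "rainbow_copy n V E (\<lambda>x. if x \<in> L then 2*n+1 - g x else f x)"
    by (intro rainbow_copy_attach_leaves[OF sg L_def W_def] f(1))
  then show ?thesis by blast
qed

theorem theorem2p3:
  fixes n :: nat and V :: "'a set" and E :: "'a set set" and v1 :: 'a
  assumes "n \<ge> 10^6"
    and "is_tree V E"
    and "card V = n + 1"
    and "v1 \<in> V"
    and "3 * card (leaves_at E v1) \<ge> 2 * n"
  shows "\<exists>f. rainbow_copy n V E f"
proof -
  have sg: "simple_graph V E" and cg: "connected_graph V E" and ce: "card E + 1 = card V"
    using assms(2) unfolding is_tree_def by auto
  define W where "W = V - leaves_at E v1"
  have "leaves_at E v1 \<subseteq> V" using leaves_at_subset[OF sg] by blast
  then have "card W + card (leaves_at E v1) = n + 1"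
    using assms(3) card_Diff_subset[OF finite_leaves_at[OF sg]] card_mono sg
    unfolding W_def simple_graph_def by fastforce
  then have "3 * (card W - 1) \<le> n" using assms(5) by linarith
  moreover have "v1 \<in> W" using assms(4) leaves_at_subset[OF sg] unfolding W_def by blast
  ultimately obtain f where "f v1 = 0" "rainbow_labelling E n W f"
    using tree_rainbow_labelling_exists[OF assms(2), of W v1]
      leaves_removed_edge_leaving[OF sg cg W_def] unfolding W_def by blast
  then show ?thesis
    using rainbow_copy_of_rainbow_labelling[OF sg] ce assms(3) unfolding W_def by simp
qed

end
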